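(* Let $L>0$, $\Omega=\mathbb{T}=(-L/2,L/2]$ with periodic boundary conditions, and let $W,W_0\in H^2(\Omega)$ be even, $L$-periodic functions with $\int_\Omega W\,dx=\int_\Omega W_0\,dx$. Suppose $u^*\in C^2(\Omega)$ is $L$-periodic, strictly positive on $\Omega$, satisfies $\int_\Omega u^*\,dx=1$, and solves both stationary equations $$0=\partial_x\big(\partial_x u^*+u^*\,\partial_x(W*u^* )\big)\quad\text{and}\quad 0=\partial_x\big(\partial_x u^*+u^*\,\partial_x(W_0*u^* )\big)\qquad\text{on }\Omega.$$ Then $W*u^*=W_0*u^*$ on $\Omega$, and consequently $\widehat W(k)=\widehat{W_0}(k)$ for every $k\in\mathbb{Z}$ such that $\widehat{u^*}(k)\neq 0$. In particular, if $\widehat{u^*}(k)\neq0$ for all $k\in\mathbb{Z}\setminus\{0\}$, then $W=W_0$ almost everywhere.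
   Context: Convolution on the torus: $(f*g)(x)=\int_\Omega f(x-y)g(y)\,dy$ with $f$ extended periodically. For an $L$-periodic function $f$, $\widehat f(k)=\int_\Omega f(x)e^{-2\pi i kx/L}\,dx$ denotes its $k$-th Fourier coefficient. $H^2(\Omega)$ is the Sobolev space of functions with weak derivatives up to order 2 in $L^2(\Omega)$. *)

theory Defs
  imports "HOL-Analysis.Analysis"
begin

definition Omega :: "real \<Rightarrow> real set" where
  "Omega L = {-L/2<..L/2}"

definition periodic :: "real \<Rightarrow> (real \<Rightarrow> 'a) \<Rightarrow> bool" where
  "periodic L f \<longleftrightarrow> (\<forall>x. f (x + L) = f x)"

definition even_fun :: "(real \<Rightarrow> real) \<Rightarrow> bool" where
  "even_fun f \<longleftrightarrow> (\<forall>x. f (- x) = f x)"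

text \<open>Convolution on the torus, f extended periodically (f is assumed periodic).\<close>
definition conv :: "real \<Rightarrow> (real \<Rightarrow> real) \<Rightarrow> (real \<Rightarrow> real) \<Rightarrow> real \<Rightarrow> real" where
  "conv L f g x = (LINT y:Omega L|lebesgue. f (x - y) * g y)"

definition fourier_coeff :: "real \<Rightarrow> (real \<Rightarrow> real) \<Rightarrow> int \<Rightarrow> complex" where
  "fourier_coeff L f k =
     (LINT x:Omega L|lebesgue. complex_of_real (f x) * exp (- (2 * pi * \<i> * of_int k * of_real x / of_real L)))"

definition L2_on :: "real set \<Rightarrow> (real \<Rightarrow> real) \<Rightarrow> bool" where
  "L2_on S f \<longleftrightarrow> f \<in> borel_measurable (restrict_space lebesgue S)
                 \<and> set_integrable lebesgue S (\<lambda>x. (f x)\<^sup>2)"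

definition smooth_periodic :: "real \<Rightarrow> (real \<Rightarrow> real) \<Rightarrow> bool" where
  "smooth_periodic L \<phi> \<longleftrightarrow> periodic L \<phi> \<and> (\<forall>k x. ((deriv ^^ k) \<phi>) differentiable at x)"

definition H2_per :: "real \<Rightarrow> (real \<Rightarrow> real) \<Rightarrow> bool" where
  "H2_per L f \<longleftrightarrow> L2_on (Omega L) f \<and>
     (\<exists>f1 f2. L2_on (Omega L) f1 \<and> L2_on (Omega L) f2 \<and>
        (\<forall>\<phi>. smooth_periodic L \<phi> \<longrightarrow>
           (LINT x:Omega L|lebesgue. f x * deriv \<phi> x) = - (LINT x:Omega L|lebesgue. f1 x * \<phi> x) \<and>
           (LINT x:Omega L|lebesgue. f1 x * deriv \<phi> x) = - (LINT x:Omega L|lebesgue. f2 x * \<phi> x)))"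

text \<open>u is C^2 (classically, on all of \<real>; u is periodic so this is C^2 on the torus).\<close>
definition C2 :: "(real \<Rightarrow> real) \<Rightarrow> bool" where
  "C2 u \<longleftrightarrow> (\<forall>x. u differentiable at x) \<and> (\<forall>x. deriv u differentiable at x)
            \<and> continuous_on UNIV (deriv (deriv u))"

end

theory Submission
  imports Defs
begin

text \<open>
  For a stationary state u the flux u' + u V', with V = W * u, is constant on the period.
  Dividing by u > 0, the function ln u + V has derivative c / u; it is periodic, so by Rolle's
  theorem c = 0 and ln u + V is constant.  This holds for W and W0 alike, hence W * u - W0 * u
  is constant, and its mean (\<integral>W - \<integral>W0) \<integral>u vanishes.  Taking Fourier
  coefficients of the two equal convolutions gives the second claim.  For the third, a function
  all of whose Fourier coefficients vanish is orthogonal to every continuous function of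
  cis (2 pi x / L) (Stone-Weierstrass), hence to indicators of intervals, and the Lebesgue
  differentiation theorem shows that it vanishes almost everywhere.
\<close>

section \<open>Periodic functions and integrals over a period\<close>

lemma sigma_finite_measure_lebesgue: "sigma_finite_measure (lebesgue :: real measure)"
proof -
  obtain A :: "real set set" where "countable A" "A \<subseteq> sets lborel" "\<Union>A = space lborel"
    "\<forall>a\<in>A. emeasure lborel a \<noteq> \<infinity>"
    using sigma_finite_lborel unfolding sigma_finite_measure_def by blast
  then show ?thesis
    unfolding sigma_finite_measure_def by (intro exI[of _ A]) auto
qed

lemma pair_sigma_finite_lebesgue: "pair_sigma_finite (lebesgue :: real measure) (lebesgue :: real measure)"
  unfolding pair_sigma_finite_def using sigma_finite_measure_lebesgue by auto

lemma set_integral_real_affine: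
  fixes f :: "real \<Rightarrow> 'a::euclidean_space"
  assumes c: "c \<noteq> 0" and f: "set_integrable lebesgue T f"
  shows "set_integrable lebesgue {x. t + c * x \<in> T} (\<lambda>x. f (t + c * x))"
    and "(LINT x:{x. t + c * x \<in> T}|lebesgue. f (t + c * x)) = (LINT x:T|lebesgue. f x) /\<^sub>R \<bar>c\<bar>"
proof -
  have "has_bochner_integral lebesgue (\<lambda>x. indicator T x *\<^sub>R f x) (LINT x:T|lebesgue. f x)"
    using f unfolding set_integrable_def set_lebesgue_integral_def
    by (simp add: has_bochner_integral_integrable)
  moreover have "indicator T (t + c * x) = (indicator {x. t + c * x \<in> T} x :: real)" for x
    by (simp add: indicator_def)
  ultimately have "has_bochner_integral lebesgue (\<lambda>x. indicator {x. t + c * x \<in> T} x *\<^sub>R f (t + c * x))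
      ((LINT x:T|lebesgue. f x) /\<^sub>R \<bar>c\<bar>)"
    using has_bochner_integral_lebesgue_real_affine_iff[OF c, of "\<lambda>x. indicator T x *\<^sub>R f x" _ t]
    by simp
  then show "set_integrable lebesgue {x. t + c * x \<in> T} (\<lambda>x. f (t + c * x))"
    and "(LINT x:{x. t + c * x \<in> T}|lebesgue. f (t + c * x)) = (LINT x:T|lebesgue. f x) /\<^sub>R \<bar>c\<bar>"
    unfolding set_integrable_def set_lebesgue_integral_def using has_bochner_integral_iff by blast+
qed

lemma set_integral_Ioc_translate:
  fixes f :: "real \<Rightarrow> 'a::euclidean_space"
  assumes f: "set_integrable lebesgue {a<..b} f"
  shows "set_integrable lebesgue {a-s<..b-s} (\<lambda>x. f (x + s))"
    and "(LINT x:{a-s<..b-s}|lebesgue. f (x + s)) = (LINT x:{a<..b}|lebesgue. f x)"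
proof -
  have T: "{x. s + 1 * x \<in> {a<..b}} = {a-s<..b-s}" by auto
  show "set_integrable lebesgue {a-s<..b-s} (\<lambda>x. f (x + s))"
    and "(LINT x:{a-s<..b-s}|lebesgue. f (x + s)) = (LINT x:{a<..b}|lebesgue. f x)"
    using set_integral_real_affine[of 1 "{a<..b}" f s] f unfolding T by (simp_all add: add.commute)
qed

lemma set_integrable_Ioc_Ico:
  fixes f :: "real \<Rightarrow> 'a::{banach, second_countable_topology}"
  shows "set_integrable lebesgue {a<..b} f \<longleftrightarrow> set_integrable lebesgue {a..<b} f"
    and "(LINT x:{a<..b}|lebesgue. f x) = (LINT x:{a..<b}|lebesgue. f x)"
proof -
  have diff: "({a<..b} - {a..<b}) \<union> ({a..<b} - {a<..b}) \<subseteq> {a, b}" by auto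
  have null: "emeasure lebesgue {x} = 0" "{x} \<in> sets lebesgue" for x :: real
    by simp_all
  show "set_integrable lebesgue {a<..b} f \<longleftrightarrow> set_integrable lebesgue {a..<b} f"
    by (rule set_integrable_discrete_difference[OF _ diff null]) simp_all
  show "(LINT x:{a<..b}|lebesgue. f x) = (LINT x:{a..<b}|lebesgue. f x)"
    by (rule set_integral_discrete_difference[OF _ diff null]) simp_all
qed

lemma periodic_add_of_int_mult:
  assumes "periodic L f"
  shows "f (x + of_int n * L) = f x"
proof -
  have nat: "f (y + real m * L) = f y" for y m
  proof (induction m)
    case (Suc m)
    have "f (y + real (Suc m) * L) = f ((y + real m * L) + L)" by (simp add: algebra_simps)
    with Suc assms show ?case by (simp add: periodic_def)
  qed simp
  show ?thesis
  proof (cases "n \<ge> 0")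
    case True
    then show ?thesis using nat[of x "nat n"] by simp
  next
    case False
    then show ?thesis using nat[of "x + of_int n * L" "nat (-n)"] by simp
  qed
qed

lemma periodic_continuous_bounded:
  fixes g :: "real \<Rightarrow> 'a::real_normed_vector"
  assumes per: "periodic L g" and cont: "continuous_on UNIV g" and L: "L > 0"
  obtains B where "\<And>y. norm (g y) \<le> B"
proof -
  have "compact (g ` {0..L})"
    by (rule compact_continuous_image) (use cont continuous_on_subset in auto)
  then obtain B where B: "\<forall>v\<in>g ` {0..L}. norm v \<le> B"
    using compact_imp_bounded bounded_iff by metis
  have "norm (g y) \<le> B" for y
  proof -
    define n where "n = \<lfloor>y / L\<rfloor>"
    have "y - of_int n * L \<in> {0..L}"
      using floor_divide_lower[OF L, of y] floor_divide_upper[OF L, of y]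
      by (auto simp: n_def algebra_simps)
    moreover have "g (y - of_int n * L) = g y"
      using periodic_add_of_int_mult[OF per, of "y - of_int n * L" n] by simp
    ultimately show ?thesis using B by (metis image_eqI)
  qed
  then show thesis by (rule that)
qed

lemma periodic_deriv: "periodic L u \<Longrightarrow> periodic L (deriv u)"
  unfolding periodic_def deriv_def by (simp add: DERIV_shift)

lemma periodic_set_integral_Ioc_within_period:
  fixes f :: "real \<Rightarrow> 'a::euclidean_space"
  assumes per: "periodic L f" and int: "set_integrable lebesgue {a<..a+L} f"
    and c: "a \<le> c" "c \<le> a + L"
  shows "set_integrable lebesgue {c<..c+L} f"
    and "(LINT x:{c<..c+L}|lebesgue. f x) = (LINT x:{a<..a+L}|lebesgue. f x)"
proof -
  have head: "set_integrable lebesgue {a<..c} f" and tail: "set_integrable lebesgue {c<..a+L} f"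
    using c by (auto intro: set_integrable_subset[OF int])
  have "f (x - L) = f x" for x
    using per unfolding periodic_def by (metis diff_add_cancel)
  then have head': "set_integrable lebesgue {a+L<..c+L} f"
    and head_eq: "(LINT x:{a+L<..c+L}|lebesgue. f x) = (LINT x:{a<..c}|lebesgue. f x)"
    using set_integral_Ioc_translate[OF head, of "-L"] by simp_all
  have split_c: "{c<..c+L} = {c<..a+L} \<union> {a+L<..c+L}"
    and split_a: "{a<..a+L} = {a<..c} \<union> {c<..a+L}" using c by auto
  show "set_integrable lebesgue {c<..c+L} f"
    unfolding split_c by (rule set_integrable_Un[OF tail head']) auto
  show "(LINT x:{c<..c+L}|lebesgue. f x) = (LINT x:{a<..a+L}|lebesgue. f x)"
    unfolding split_c split_a
    by (simp add: set_integral_Un[OF _ tail head'] set_integral_Un[OF _ head tail] head_eq)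
qed

lemma periodic_set_integral_Ioc_shift:
  fixes f :: "real \<Rightarrow> 'a::euclidean_space"
  assumes per: "periodic L f" and L: "L > 0" and int: "set_integrable lebesgue {a<..a+L} f"
  shows "set_integrable lebesgue {c<..c+L} f"
    and "(LINT x:{c<..c+L}|lebesgue. f x) = (LINT x:{a<..a+L}|lebesgue. f x)"
proof -
  define n where "n = \<lfloor>(c - a) / L\<rfloor>"
  define c' where "c' = c - of_int n * L"
  have "a \<le> c'" "c' \<le> a + L"
    using floor_divide_lower[OF L, of "c - a"] floor_divide_upper[OF L, of "c - a"]
    unfolding c'_def n_def by (auto simp: algebra_simps)
  note window = periodic_set_integral_Ioc_within_period[OF per int this]
  have "f (x + - (of_int n * L)) = f x" for x
    using periodic_add_of_int_mult[OF per, of x "- n"] by simp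
  moreover have "{c' - - (of_int n * L)<..c' + L - - (of_int n * L)} = {c<..c+L}"
    by (auto simp: c'_def)
  ultimately show "set_integrable lebesgue {c<..c+L} f"
    and "(LINT x:{c<..c+L}|lebesgue. f x) = (LINT x:{a<..a+L}|lebesgue. f x)"
    using set_integral_Ioc_translate[OF window(1), of "- (of_int n * L)"] window(2) by simp_all
qed

lemma Omega_eq_Ioc_period: "Omega L = {-L/2<..-L/2+L}"
  by (simp add: Omega_def)

lemma lmeasurable_Omega: "Omega L \<in> lmeasurable"
  unfolding Omega_def by (rule bounded_set_imp_lmeasurable) auto

lemma sets_lebesgue_Omega [measurable]: "Omega L \<in> sets lebesgue"
  using lmeasurable_Omega fmeasurable_def by blast

lemma measure_Omega: "L > 0 \<Longrightarrow> measure lebesgue (Omega L) = L"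
  unfolding Omega_def by (subst measure_completion) (auto simp: measure_lborel_Ioc)

lemma borel_measurable_lebesgue_continuous [measurable]:
  fixes g :: "real \<Rightarrow> 'a::{second_countable_topology, real_normed_vector}"
  assumes "continuous_on UNIV g"
  shows "g \<in> borel_measurable lebesgue"
  by (rule measurable_completion) (simp add: borel_measurable_continuous_onI assms)

lemma continuous_set_integrable_Ioc:
  fixes f :: "real \<Rightarrow> 'a::euclidean_space"
  assumes "continuous_on UNIV f"
  shows "set_integrable lebesgue {a<..b} f"
proof -
  have "f absolutely_integrable_on {a..b}"
    by (rule absolutely_integrable_continuous_real) (rule continuous_on_subset[OF assms], simp)
  then show ?thesis by (rule set_integrable_subset) auto
qed

lemma set_integrable_scaleR_bounded:
  fixes W :: "real \<Rightarrow> real" and h :: "real \<Rightarrow> 'b::{banach, second_countable_topology}"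
  assumes W: "set_integrable lebesgue S W" and h: "h \<in> borel_measurable lebesgue"
    and bound: "\<And>z. norm (h z) \<le> B"
  shows "set_integrable lebesgue S (\<lambda>z. W z *\<^sub>R h z)"
proof -
  have "(\<lambda>z. indicator S z *\<^sub>R W z) \<in> borel_measurable lebesgue"
    using W unfolding set_integrable_def by (rule borel_measurable_integrable)
  then have meas: "set_borel_measurable lebesgue S (\<lambda>z. W z *\<^sub>R h z)"
    unfolding set_borel_measurable_def using borel_measurable_scaleR[OF _ h] by simp
  have "norm (W z *\<^sub>R h z) \<le> norm (B * W z)" for z
  proof -
    have "norm (W z *\<^sub>R h z) \<le> \<bar>W z\<bar> * B" using bound[of z] by (simp add: mult_left_mono)
    also have "\<dots> \<le> norm (B * W z)" by (simp add: abs_mult mult.commute mult_right_mono)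
    finally show ?thesis .
  qed
  then show ?thesis
    using W by (intro set_integrable_bound[OF _ meas, of "\<lambda>z. B * W z"]) (auto intro: always_eventually)
qed

lemma abs_set_integral_mult_le:
  fixes D h :: "'a \<Rightarrow> real"
  assumes iD: "set_integrable M S D" and iDh: "set_integrable M S (\<lambda>x. D x * h x)"
    and h: "\<And>x. x \<in> S \<Longrightarrow> \<bar>h x\<bar> \<le> e"
  shows "\<bar>LINT x:S|M. D x * h x\<bar> \<le> e * (LINT x:S|M. \<bar>D x\<bar>)"
proof -
  have "\<bar>LINT x:S|M. D x * h x\<bar> \<le> (LINT x:S|M. \<bar>D x * h x\<bar>)"
    using set_integral_norm_bound[OF iDh] by simp
  also have "\<dots> \<le> (LINT x:S|M. e * \<bar>D x\<bar>)"
  proof (rule set_integral_mono)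
    show "\<bar>D x * h x\<bar> \<le> e * \<bar>D x\<bar>" if "x \<in> S" for x
      using h[OF that] by (metis abs_ge_zero abs_mult mult.commute mult_left_mono)
  qed (use set_integrable_abs[OF iDh] set_integrable_abs[OF iD] in simp_all)
  finally show ?thesis by simp
qed

lemma set_integrable_Omega_if_L2:
  assumes "L2_on (Omega L) f"
  shows "set_integrable lebesgue (Omega L) f"
proof -
  have meas: "set_borel_measurable lebesgue (Omega L) f"
    using assms unfolding L2_on_def set_borel_measurable_def
    by (subst (asm) borel_measurable_restrict_space_iff) auto
  have bound: "\<bar>a\<bar> \<le> 1 + a\<^sup>2" for a :: real
  proof -
    have "0 \<le> (\<bar>a\<bar> - 1)\<^sup>2" by simp
    then show ?thesis by (simp add: power2_eq_square algebra_simps)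
  qed
  have "set_integrable lebesgue (Omega L) (\<lambda>x. 1 + (f x)\<^sup>2)"
    using assms unfolding L2_on_def
    by (intro set_integral_add absolutely_integrable_on_const lmeasurable_Omega) auto
  then show ?thesis
    by (rule set_integrable_bound[OF _ meas]) (auto simp: bound intro!: always_eventually)
qed

lemma set_integrable_Omega_if_H2_per: "H2_per L f \<Longrightarrow> set_integrable lebesgue (Omega L) f"
  unfolding H2_per_def by (blast intro: set_integrable_Omega_if_L2)

lemma periodic_set_integral_Omega_shift:
  fixes f :: "real \<Rightarrow> 'a::euclidean_space"
  assumes per: "periodic L f" and L: "L > 0" and int: "set_integrable lebesgue (Omega L) f"
  shows "set_integrable lebesgue {c<..c+L} f"
    and "(LINT x:{c<..c+L}|lebesgue. f x) = (LINT x:Omega L|lebesgue. f x)"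
  using periodic_set_integral_Ioc_shift[OF per L, of "-L/2" c] int
  unfolding Omega_eq_Ioc_period by auto

lemma periodic_set_integral_Omega_translate:
  fixes f :: "real \<Rightarrow> 'a::euclidean_space"
  assumes per: "periodic L f" and L: "L > 0" and int: "set_integrable lebesgue (Omega L) f"
  shows "set_integrable lebesgue (Omega L) (\<lambda>x. f (x - z))"
    and "(LINT x:Omega L|lebesgue. f (x - z)) = (LINT x:Omega L|lebesgue. f x)"
proof -
  note window = periodic_set_integral_Omega_shift[OF per L int, of "-L/2 - z"]
  have "{-L/2 - z - (-z)<..-L/2 - z + L - (-z)} = Omega L" by (simp add: Omega_def)
  then show "set_integrable lebesgue (Omega L) (\<lambda>x. f (x - z))"
    and "(LINT x:Omega L|lebesgue. f (x - z)) = (LINT x:Omega L|lebesgue. f x)"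
    using set_integral_Ioc_translate[OF window(1), of "-z"] window(2) by simp_all
qed

lemma set_integral_periodic_conv_product:
  fixes w \<psi> :: "real \<Rightarrow> complex"
  assumes L: "L > 0" and iw: "set_integrable lebesgue (Omega L) w"
    and p\<psi>: "periodic L \<psi>" and c\<psi>: "continuous_on UNIV \<psi>"
  shows "(LINT x:Omega L|lebesgue. LINT z:Omega L|lebesgue. w z * \<psi> (x - z))
       = (LINT z:Omega L|lebesgue. w z) * (LINT x:Omega L|lebesgue. \<psi> x)"
proof -
  define w' where "w' z = indicator (Omega L) z *\<^sub>R w z" for z
  define F where "F z x = w' z * (indicator (Omega L) x *\<^sub>R \<psi> (x - z))" for z x
  have iw': "integrable lebesgue w'" using iw unfolding set_integrable_def w'_def .
  have i\<psi>: "set_integrable lebesgue (Omega L) \<psi>"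
    using continuous_set_integrable_Ioc[OF c\<psi>] unfolding Omega_def .
  have i\<psi>_norm: "set_integrable lebesgue (Omega L) (\<lambda>x. norm (\<psi> x))"
    using i\<psi> by (rule set_integrable_norm)
  have p\<psi>_norm: "periodic L (\<lambda>x. norm (\<psi> x))" using p\<psi> by (simp add: periodic_def)
  have "(\<lambda>p::real \<times> real. snd p - fst p) \<in> borel_measurable (lebesgue \<Otimes>\<^sub>M lebesgue)"
    by (intro borel_measurable_diff measurable_compose[OF measurable_snd]
        measurable_compose[OF measurable_fst] borel_measurable_lebesgue_continuous continuous_on_id)
  then have "(\<lambda>p. \<psi> (snd p - fst p)) \<in> borel_measurable (lebesgue \<Otimes>\<^sub>M lebesgue)"
    by (rule measurable_compose[OF _ borel_measurable_continuous_onI[OF c\<psi>]])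
  moreover have "(\<lambda>p. w' (fst p)) \<in> borel_measurable (lebesgue \<Otimes>\<^sub>M lebesgue)"
    by (rule measurable_compose[OF measurable_fst borel_measurable_integrable[OF iw']])
  ultimately have mF: "(\<lambda>(z, x). F z x) \<in> borel_measurable (lebesgue \<Otimes>\<^sub>M lebesgue)"
    unfolding F_def case_prod_beta by measurable
  have norm_F: "(LINT x|lebesgue. norm (F z x)) = norm (w' z) * (LINT x:Omega L|lebesgue. norm (\<psi> x))"
    for z
    using periodic_set_integral_Omega_translate(2)[OF p\<psi>_norm L i\<psi>_norm, of z]
    by (simp add: F_def set_lebesgue_integral_def norm_mult mult.left_commute)
  have inner: "(LINT x|lebesgue. F z x) = w' z * (LINT x:Omega L|lebesgue. \<psi> x)" for z
    using periodic_set_integral_Omega_translate(2)[OF p\<psi> L i\<psi>, of z]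
    unfolding F_def set_lebesgue_integral_def by (subst integral_mult_right_zero) simp
  have "integrable (lebesgue \<Otimes>\<^sub>M lebesgue) (\<lambda>(z, x). F z x)"
  proof (rule pair_sigma_finite.Fubini_integrable[OF pair_sigma_finite_lebesgue mF])
    show "integrable lebesgue (\<lambda>z. LINT x|lebesgue. norm ((\<lambda>(z, x). F z x) (z, x)))"
      using iw' by (simp add: norm_F)
    have "integrable lebesgue (\<lambda>x. F z x)" for z
      using periodic_set_integral_Omega_translate(1)[OF p\<psi> L i\<psi>, of z]
      unfolding F_def set_integrable_def by (rule integrable_mult_right)
    then show "AE z in lebesgue. integrable lebesgue (\<lambda>x. (\<lambda>(z, x). F z x) (z, x))" by simp
  qed
  then have "(LINT x|lebesgue. LINT z|lebesgue. F z x) = (LINT z|lebesgue. LINT x|lebesgue. F z x)"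
    by (rule pair_sigma_finite.Fubini_integral[OF pair_sigma_finite_lebesgue])
  moreover have "(LINT z|lebesgue. F z x) = indicator (Omega L) x *\<^sub>R (LINT z:Omega L|lebesgue. w z * \<psi> (x - z))"
    for x
    by (cases "x \<in> Omega L") (simp_all add: F_def w'_def set_lebesgue_integral_def mult.left_commute)
  ultimately show ?thesis
    by (simp add: inner set_lebesgue_integral_def w'_def flip: mult_scaleR_left)
qed

section \<open>Convolution and its derivative\<close>

lemma periodic_conv:
  assumes "periodic L W"
  shows "periodic L (conv L W u)"
proof -
  have "W (x + L - y) = W (x - y)" for x y
    using assms unfolding periodic_def by (metis add.commute add_diff_eq)
  then show ?thesis unfolding periodic_def conv_def by simp
qed

lemma conv_eq_set_integral:
  assumes L: "L > 0" and pW: "periodic L W" and iW: "set_integrable lebesgue (Omega L) W"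
    and cg: "continuous_on UNIV g" and pg: "periodic L g"
  shows "set_integrable lebesgue (Omega L) (\<lambda>z. W z * g (x - z))"
    and "conv L W g x = (LINT z:Omega L|lebesgue. W z * g (x - z))"
proof -
  define h where "h z = W z * g (x - z)" for z
  have "g (x - (z + L)) = g (x - z)" for z
    using pg unfolding periodic_def by (metis diff_add_cancel diff_diff_eq)
  then have ph: "periodic L h"
    using pW unfolding periodic_def h_def by simp
  obtain B where B: "\<And>y. norm (g (x - y)) \<le> B"
    using periodic_continuous_bounded[OF pg cg L] by metis
  have "continuous_on UNIV (\<lambda>z. g (x - z))"
    by (rule continuous_on_compose2[OF cg]) (auto intro: continuous_intros)
  then have ih: "set_integrable lebesgue (Omega L) h"
    using set_integrable_scaleR_bounded[OF iW _ B] unfolding h_def by simp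
  then show "set_integrable lebesgue (Omega L) (\<lambda>z. W z * g (x - z))" unfolding h_def .
  define T where "T = {x - L/2..<x - L/2 + L}"
  note window = periodic_set_integral_Omega_shift[OF ph L ih, of "x - L/2"]
  have iT: "set_integrable lebesgue T h"
    using window(1) set_integrable_Ioc_Ico(1) unfolding T_def by blast
  have reflect: "{y. x + -1 * y \<in> T} = Omega L" by (auto simp: T_def Omega_def)
  have "conv L W g x = (LINT y:{y. x + -1 * y \<in> T}|lebesgue. h (x + -1 * y))"
    unfolding reflect conv_def h_def by simp
  also have "\<dots> = (LINT y:T|lebesgue. h y)"
    using set_integral_real_affine(2)[of "-1" T h x] iT by simp
  also have "\<dots> = (LINT z:Omega L|lebesgue. h z)"
    using window(2) set_integrable_Ioc_Ico(2) unfolding T_def by metis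
  finally show "conv L W g x = (LINT z:Omega L|lebesgue. W z * g (x - z))" unfolding h_def .
qed

lemma integral_dominated_convergence_at:
  fixes s :: "real \<Rightarrow> 'a \<Rightarrow> 'b::{banach, second_countable_topology}" and w :: "'a \<Rightarrow> real"
  assumes "f \<in> borel_measurable M" "\<And>t. s t \<in> borel_measurable M" "integrable M w"
    and lim: "AE x in M. ((\<lambda>t. s t x) \<longlongrightarrow> f x) (at a)"
    and "\<And>t. AE x in M. norm (s t x) \<le> w x"
  shows "((\<lambda>t. integral\<^sup>L M (s t)) \<longlongrightarrow> integral\<^sup>L M f) (at a)"
  unfolding tendsto_at_iff_sequentially
proof (intro allI impI)
  fix X :: "nat \<Rightarrow> real" assume "\<forall>i. X i \<in> UNIV - {a}" "X \<longlonglongrightarrow> a"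
  then have X: "filterlim X (at a) sequentially"
    by (intro filterlim_atI) auto
  show "((\<lambda>t. integral\<^sup>L M (s t)) \<circ> X) \<longlonglongrightarrow> integral\<^sup>L M f"
    unfolding comp_def
  proof (rule integral_dominated_convergence[where w = w])
    show "AE x in M. (\<lambda>i. s (X i) x) \<longlonglongrightarrow> f x"
      using lim by eventually_elim (rule filterlim_compose[OF _ X])
  qed (use assms in auto)
qed

lemma difference_quotient_bound:
  fixes u u' :: "real \<Rightarrow> real"
  assumes du: "\<And>s. (u has_real_derivative u' s) (at s)" and B: "\<And>s. \<bar>u' s\<bar> \<le> B"
  shows "\<bar>(u (a + h) - u a) / h\<bar> \<le> B"
proof (cases "h = 0")
  case True
  then show ?thesis using B[of a] by simp
next
  case False
  obtain z where "u (a + h) - u a = h * u' z"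
  proof (cases "0 < h")
    case True
    then show thesis using MVT2[of a "a + h" u u'] du that by auto
  next
    case False
    with \<open>h \<noteq> 0\<close> have "a + h < a" by simp
    then obtain z where "u a - u (a + h) = (a - (a + h)) * u' z"
      using MVT2[of "a + h" a u u'] du by blast
    then show thesis using that[of z] by (simp add: algebra_simps)
  qed
  then show ?thesis using False B[of z] by (simp add: abs_mult)
qed

lemma conv_has_real_derivative:
  assumes L: "L > 0" and pW: "periodic L W" and iW: "set_integrable lebesgue (Omega L) W"
    and du: "\<And>s. (u has_real_derivative u' s) (at s)"
    and cu': "continuous_on UNIV u'" and pu: "periodic L u" and pu': "periodic L u'"
  shows "(conv L W u has_real_derivative (LINT z:Omega L|lebesgue. W z * u' (x - z))) (at x)"
proof -
  have cu: "continuous_on UNIV u"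
    using du by (meson DERIV_isCont continuous_at_imp_continuous_on)
  obtain B where B: "\<And>y. \<bar>u' y\<bar> \<le> B"
    using periodic_continuous_bounded[OF pu' cu' L] by (metis real_norm_def)
  define q where "q h z = (u (x - z + h) - u (x - z)) / h" for h z
  have q_bound: "norm (q h z) \<le> B" for h z
    unfolding q_def real_norm_def by (rule difference_quotient_bound[OF du B])
  have "continuous_on UNIV (q h)" for h
    unfolding q_def
    by (cases "h = 0") (auto intro!: continuous_intros continuous_on_compose2[OF cu])
  then have iq: "set_integrable lebesgue (Omega L) (\<lambda>z. W z * q h z)" for h
    using set_integrable_scaleR_bounded[OF iW _ q_bound] by simp
  have quotient: "(conv L W u (x + h) - conv L W u x) / h = (LINT z:Omega L|lebesgue. W z * q h z)"
    for h
  proof -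
    note shifted = conv_eq_set_integral[OF L pW iW cu pu]
    have "conv L W u (x + h) - conv L W u x
        = (LINT z:Omega L|lebesgue. W z * u (x + h - z) - W z * u (x - z))"
      using set_integral_diff(2)[OF shifted(1) shifted(1)] shifted(2) by simp
    then show ?thesis
      unfolding q_def by (simp add: algebra_simps diff_divide_distrib flip: set_integral_divide_zero)
  qed
  have "((\<lambda>h. LINT z:Omega L|lebesgue. W z * q h z) \<longlongrightarrow> (LINT z:Omega L|lebesgue. W z * u' (x - z))) (at 0)"
    unfolding set_lebesgue_integral_def
  proof (rule integral_dominated_convergence_at[where w = "\<lambda>z. indicator (Omega L) z * (\<bar>W z\<bar> * B)"])
    show "(\<lambda>z. indicator (Omega L) z *\<^sub>R (W z * q h z)) \<in> borel_measurable lebesgue" for h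
      using iq unfolding set_integrable_def by (rule borel_measurable_integrable)
    show "(\<lambda>z. indicator (Omega L) z *\<^sub>R (W z * u' (x - z))) \<in> borel_measurable lebesgue"
      using conv_eq_set_integral(1)[OF L pW iW cu' pu'] unfolding set_integrable_def
      by (rule borel_measurable_integrable)
    show "integrable lebesgue (\<lambda>z. indicator (Omega L) z * (\<bar>W z\<bar> * B))"
      using integrable_mult_left[OF set_integrable_abs[OF iW, unfolded set_integrable_def], of B]
      by (simp add: mult.assoc)
    show "AE z in lebesgue. norm (indicator (Omega L) z *\<^sub>R (W z * q h z))
        \<le> indicator (Omega L) z * (\<bar>W z\<bar> * B)" for h
      using q_bound by (intro always_eventually) (auto simp: abs_mult mult_left_mono indicator_def)
    have "((\<lambda>h. q h z) \<longlongrightarrow> u' (x - z)) (at 0)" for z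
      using du[of "x - z"] unfolding DERIV_def q_def .
    then show "AE z in lebesgue. ((\<lambda>h. indicator (Omega L) z *\<^sub>R (W z * q h z))
        \<longlongrightarrow> indicator (Omega L) z *\<^sub>R (W z * u' (x - z))) (at 0)"
      by (intro always_eventually allI tendsto_intros)
  qed
  then show ?thesis
    unfolding DERIV_def quotient .
qed

lemma C2_has_real_derivative:
  assumes "C2 u"
  shows "(u has_real_derivative deriv u x) (at x)"
    and "(deriv u has_real_derivative deriv (deriv u) x) (at x)"
  using assms unfolding C2_def by (simp_all add: DERIV_deriv_iff_real_differentiable)

lemma C2_continuous_on:
  assumes "C2 u"
  shows "continuous_on UNIV u" and "continuous_on UNIV (deriv u)"
  using C2_has_real_derivative[OF assms]
  by (meson DERIV_isCont continuous_at_imp_continuous_on)+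

lemma conv_has_real_derivative_C2:
  assumes L: "L > 0" and pW: "periodic L W" and iW: "set_integrable lebesgue (Omega L) W"
    and u: "C2 u" and pu: "periodic L u"
  shows "(conv L W u has_real_derivative deriv (conv L W u) x) (at x)"
  using conv_has_real_derivative[OF L pW iW C2_has_real_derivative(1)[OF u]
      C2_continuous_on(2)[OF u] pu periodic_deriv[OF pu]]
  by (metis DERIV_imp_deriv)

section \<open>Stationary states\<close>

lemma stationary_log_plus_potential_const:
  fixes u u' V V' :: "real \<Rightarrow> real"
  assumes L: "L > 0"
    and du: "\<And>s. (u has_real_derivative u' s) (at s)" and pu: "periodic L u"
    and upos: "\<forall>x\<in>Omega L. u x > 0"
    and dV: "\<And>s. (V has_real_derivative V' s) (at s)" and pV: "periodic L V"
    and flux: "\<forall>x\<in>Omega L. ((\<lambda>y. u' y + u y * V' y) has_real_derivative 0) (at x)"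
    and x: "x \<in> Omega L" and y: "y \<in> Omega L"
  shows "ln (u x) + V x = ln (u y) + V y"
proof -
  define a b where "a = -L/2" and "b = L/2"
  have ab: "a < b" and b_eq: "b = a + L" using L by (simp_all add: a_def b_def)
  have u_ends: "u a = u b" and V_ends: "V a = V b"
    using pu pV unfolding periodic_def b_eq by metis+
  have upos': "u s > 0" if "s \<in> {a..b}" for s
    using upos that u_ends ab unfolding Omega_def a_def b_def
    by (cases "s = a") (auto simp: a_def b_def)
  define c where "c = u' 0 + u 0 * V' 0"
  have J: "u' s + u s * V' s = c" if "s \<in> {a<..<b}" for s
    unfolding c_def
    by (rule DERIV_isconst3[OF ab that, of _ "\<lambda>y. u' y + u y * V' y"])
      (use L flux in \<open>auto simp: a_def b_def Omega_def\<close>)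
  define F where "F s = ln (u s) + V s" for s
  have dF: "(F has_real_derivative (u' s / u s + V' s)) (at s)" if "s \<in> {a..b}" for s
    unfolding F_def using upos'[OF that] by (auto intro!: derivative_eq_intros du dV)
  have dF_interior: "(F has_real_derivative (c / u s)) (at s)" if "s \<in> {a<..<b}" for s
  proof -
    have "u' s / u s + V' s = c / u s"
      using J[OF that] upos'[of s] that by (auto simp: field_simps)
    then show ?thesis using dF[of s] that by simp
  qed
  have cF: "continuous_on {a..b} F"
    using dF by (meson DERIV_isCont continuous_at_imp_continuous_on)
  obtain \<xi> where \<xi>: "a < \<xi>" "\<xi> < b" "(F has_real_derivative 0) (at \<xi>)"
    using Rolle[OF ab _ cF] dF_interior u_ends V_ends unfolding F_def
    by (metis greaterThanLessThan_iff real_differentiable_def)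
  then have "c / u \<xi> = 0"
    using DERIV_unique dF_interior by force
  then have "c = 0" using upos'[of \<xi>] \<xi> by simp
  then have F_const: "F s = F a" if "s \<in> {a..b}" for s
    using DERIV_isconst2[OF ab cF, of s] dF_interior that by auto
  show ?thesis
    using F_const[of x] F_const[of y] x y unfolding F_def Omega_def a_def b_def by simp
qed

section \<open>Fourier coefficients\<close>

definition fourier_kernel :: "real \<Rightarrow> int \<Rightarrow> real \<Rightarrow> complex" where
  "fourier_kernel L k x = exp (- (2 * pi * \<i> * of_int k * of_real x / of_real L))"

lemma fourier_coeff_eq_kernel:
  "fourier_coeff L f k = (LINT x:Omega L|lebesgue. complex_of_real (f x) * fourier_kernel L k x)"
  by (simp add: fourier_coeff_def fourier_kernel_def)

lemma fourier_kernel_add: "fourier_kernel L k (a + b) = fourier_kernel L k a * fourier_kernel L k b"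
  unfolding fourier_kernel_def by (simp add: exp_add[symmetric] algebra_simps add_divide_distrib)

lemma fourier_kernel_mult: "fourier_kernel L a x * fourier_kernel L b x = fourier_kernel L (a + b) x"
  unfolding fourier_kernel_def by (simp add: exp_add[symmetric] algebra_simps add_divide_distrib)

lemma fourier_kernel_0 [simp]: "fourier_kernel L 0 x = 1"
  by (simp add: fourier_kernel_def)

lemma norm_fourier_kernel [simp]: "norm (fourier_kernel L k x) = 1"
  by (simp add: fourier_kernel_def norm_exp_eq_Re)

lemma periodic_fourier_kernel: "periodic L (fourier_kernel L k)"
proof -
  have "fourier_kernel L k L = 1"
  proof (cases "L = 0")
    case False
    then have "fourier_kernel L k L = exp (complex_of_real (2 * of_int (-k) * pi) * \<i>)"
      by (simp add: fourier_kernel_def field_simps)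
    also have "\<dots> = 1" by (rule exp_integer_2pi) simp
    finally show ?thesis .
  qed (simp add: fourier_kernel_def)
  then show ?thesis by (simp add: periodic_def fourier_kernel_add)
qed

lemma continuous_on_fourier_kernel: "continuous_on UNIV (fourier_kernel L k)"
  by (cases "L = 0") (auto intro!: continuous_intros simp: fourier_kernel_def)

lemma set_integrable_mult_fourier_kernel:
  assumes "set_integrable lebesgue (Omega L) f"
  shows "set_integrable lebesgue (Omega L) (\<lambda>x. complex_of_real (f x) * fourier_kernel L k x)"
  using set_integrable_scaleR_bounded[OF assms
      borel_measurable_lebesgue_continuous[OF continuous_on_fourier_kernel[of L k]], where B = 1]
  by (simp add: scaleR_conv_of_real)

lemma fourier_coeff_cong:
  "(\<And>x. x \<in> Omega L \<Longrightarrow> f x = g x) \<Longrightarrow> fourier_coeff L f k = fourier_coeff L g k"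
  unfolding fourier_coeff_def by (rule set_lebesgue_integral_cong) auto

lemma fourier_coeff_0: "fourier_coeff L f 0 = complex_of_real (LINT x:Omega L|lebesgue. f x)"
  by (simp add: fourier_coeff_eq_kernel set_integral_complex_of_real)

lemma fourier_coeff_diff:
  assumes "set_integrable lebesgue (Omega L) f" "set_integrable lebesgue (Omega L) g"
  shows "fourier_coeff L (\<lambda>x. f x - g x) k = fourier_coeff L f k - fourier_coeff L g k"
  unfolding fourier_coeff_eq_kernel
  using set_integral_diff(2)[OF assms[THEN set_integrable_mult_fourier_kernel]]
  by (simp add: left_diff_distrib)

lemma fourier_coeff_conv:
  assumes L: "L > 0" and pW: "periodic L W" and iW: "set_integrable lebesgue (Omega L) W"
    and cg: "continuous_on UNIV g" and pg: "periodic L g"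
  shows "fourier_coeff L (conv L W g) k = fourier_coeff L W k * fourier_coeff L g k"
proof -
  define e where "e = fourier_kernel L k"
  define w where "w z = complex_of_real (W z) * e z" for z
  define \<psi> where "\<psi> y = complex_of_real (g y) * e y" for y
  have c\<psi>: "continuous_on UNIV \<psi>"
    unfolding \<psi>_def e_def by (intro continuous_intros cg continuous_on_fourier_kernel)
  have p\<psi>: "periodic L \<psi>"
    using pg periodic_fourier_kernel[of L k] by (simp add: periodic_def \<psi>_def e_def)
  have iw: "set_integrable lebesgue (Omega L) w"
    unfolding w_def e_def by (rule set_integrable_mult_fourier_kernel[OF iW])
  have product: "(LINT x:Omega L|lebesgue. LINT z:Omega L|lebesgue. w z * \<psi> (x - z))
      = (LINT z:Omega L|lebesgue. w z) * (LINT x:Omega L|lebesgue. \<psi> x)"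
    by (rule set_integral_periodic_conv_product[OF L iw p\<psi> c\<psi>])
  have "complex_of_real (conv L W g x) * e x = (LINT z:Omega L|lebesgue. w z * \<psi> (x - z))" for x
  proof -
    have "e x = e z * e (x - z)" for z
      using fourier_kernel_add[of L k z "x - z"] by (simp add: e_def)
    then have pointwise: "complex_of_real (W z * g (x - z)) * e x = w z * \<psi> (x - z)" for z
      by (simp add: w_def \<psi>_def)
    have "complex_of_real (conv L W g x) * e x
        = (LINT z:Omega L|lebesgue. complex_of_real (W z * g (x - z))) * e x"
      by (simp only: conv_eq_set_integral(2)[OF L pW iW cg pg] set_integral_complex_of_real)
    also have "\<dots> = (LINT z:Omega L|lebesgue. w z * \<psi> (x - z))"
      by (simp only: set_integral_mult_left[symmetric] pointwise)
    finally show ?thesis .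
  qed
  then show ?thesis
    by (simp add: fourier_coeff_eq_kernel product flip: e_def w_def \<psi>_def)
qed

lemma set_integral_conv:
  assumes L: "L > 0" and pW: "periodic L W" and iW: "set_integrable lebesgue (Omega L) W"
    and cg: "continuous_on UNIV g" and pg: "periodic L g"
  shows "(LINT x:Omega L|lebesgue. conv L W g x)
       = (LINT x:Omega L|lebesgue. W x) * (LINT x:Omega L|lebesgue. g x)"
  using fourier_coeff_conv[OF L pW iW cg pg, of 0] by (simp add: fourier_coeff_0 flip: of_real_mult)

section \<open>Vanishing Fourier coefficients\<close>

inductive trig_poly :: "real \<Rightarrow> (real \<Rightarrow> complex) \<Rightarrow> bool" for L where
  kernel: "trig_poly L (fourier_kernel L m)"
| add: "trig_poly L f \<Longrightarrow> trig_poly L g \<Longrightarrow> trig_poly L (\<lambda>x. f x + g x)"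
| scale: "trig_poly L f \<Longrightarrow> trig_poly L (\<lambda>x. c * f x)"

lemma trig_poly_const: "trig_poly L (\<lambda>x. c)"
  using trig_poly.scale[OF trig_poly.kernel[of L 0], of c] by simp

lemma trig_poly_diff: "trig_poly L f \<Longrightarrow> trig_poly L g \<Longrightarrow> trig_poly L (\<lambda>x. f x - g x)"
  using trig_poly.add[of L f "\<lambda>x. (-1) * g x"] trig_poly.scale[of L g "-1"] by simp

lemma trig_poly_mult_kernel: "trig_poly L f \<Longrightarrow> trig_poly L (\<lambda>x. fourier_kernel L m x * f x)"
proof (induction rule: trig_poly.induct)
  case (kernel k)
  then show ?case using trig_poly.kernel[of L "m + k"] by (simp add: fourier_kernel_mult)
next
  case (add f g)
  then show ?case using trig_poly.add[OF add.IH] by (simp add: distrib_left)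
next
  case (scale f c)
  then show ?case using trig_poly.scale[OF scale.IH, of c] by (simp add: mult.left_commute)
qed

lemma trig_poly_mult: "trig_poly L f \<Longrightarrow> trig_poly L g \<Longrightarrow> trig_poly L (\<lambda>x. f x * g x)"
proof (induction rule: trig_poly.induct)
  case (kernel k)
  then show ?case using trig_poly_mult_kernel by blast
next
  case (add f1 f2)
  then show ?case using trig_poly.add[OF add.IH] by (simp add: distrib_right)
next
  case (scale f c)
  then show ?case using trig_poly.scale[OF scale.IH, of c] by (simp add: mult.assoc)
qed

lemma linear_complex_to_real_Re_Im:
  fixes g :: "complex \<Rightarrow> real"
  assumes "linear g"
  shows "g z = Re z * g 1 + Im z * g \<i>"
proof -
  have "z = Re z *\<^sub>R 1 + Im z *\<^sub>R \<i>" by (simp add: complex_eq_iff)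
  then have "g z = g (Re z *\<^sub>R 1 + Im z *\<^sub>R \<i>)" by simp
  also have "\<dots> = Re z * g 1 + Im z * g \<i>" using assms by (simp add: linear_add linear_scale)
  finally show ?thesis .
qed

lemma trig_poly_polynomial_function_cis:
  assumes g: "real_polynomial_function g"
  shows "trig_poly L (\<lambda>x. complex_of_real (g (cis (2 * pi / L * x))))"
  using g
proof (induction rule: real_polynomial_function.induct)
  case (linear g)
  define e where "e = fourier_kernel L"
  define \<theta> where "\<theta> x = 2 * pi / L * x" for x
  have e_exp: "e (-1) x = exp (\<i> * complex_of_real (\<theta> x))"
    "e 1 x = exp (- (\<i> * complex_of_real (\<theta> x)))" for x
    by (simp_all add: e_def \<theta>_def fourier_kernel_def mult.commute mult.left_commute)
  have cos_e: "complex_of_real (cos (\<theta> x)) = (e (-1) x + e 1 x) / 2" for x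
    unfolding cos_of_real[symmetric] cos_exp_eq e_exp ..
  have sin_e: "complex_of_real (sin (\<theta> x)) = (e (-1) x - e 1 x) / (2 * \<i>)" for x
    unfolding sin_of_real[symmetric] sin_exp_eq e_exp ..
  have "complex_of_real (g (cis (\<theta> x)))
      = (e (-1) x + e 1 x) * (complex_of_real (g 1) / 2)
        + (e (-1) x - e 1 x) * (complex_of_real (g \<i>) / (2 * \<i>))" for x
  proof -
    have "complex_of_real (g (cis (\<theta> x)))
        = complex_of_real (cos (\<theta> x)) * complex_of_real (g 1)
          + complex_of_real (sin (\<theta> x)) * complex_of_real (g \<i>)"
      using linear_complex_to_real_Re_Im[OF bounded_linear.linear[OF linear], of "cis (\<theta> x)"]
      by simp
    then show ?thesis
      unfolding cos_e sin_e by (simp only: times_divide_eq_left times_divide_eq_right)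
  qed
  moreover have "trig_poly L (\<lambda>x. (e (-1) x + e 1 x) * (complex_of_real (g 1) / 2)
        + (e (-1) x - e 1 x) * (complex_of_real (g \<i>) / (2 * \<i>)))"
    unfolding e_def
    by (intro trig_poly.add trig_poly_diff trig_poly_mult trig_poly.kernel trig_poly_const)
  ultimately show ?case by (simp add: \<theta>_def)
qed (auto intro: trig_poly_const trig_poly.add trig_poly_mult)

lemma trig_poly_orthogonal:
  assumes iD: "set_integrable lebesgue (Omega L) D"
    and coeff: "\<And>m. fourier_coeff L D m = 0" and p: "trig_poly L p"
  shows "set_integrable lebesgue (Omega L) (\<lambda>x. complex_of_real (D x) * p x)"
    and "(LINT x:Omega L|lebesgue. complex_of_real (D x) * p x) = 0"
  using p
proof (induction rule: trig_poly.induct)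
  case (kernel m)
  { case 1 show ?case by (rule set_integrable_mult_fourier_kernel[OF iD]) }
  { case 2 show ?case using coeff[of m] by (simp add: fourier_coeff_eq_kernel) }
next
  case (add f g)
  { case 1 show ?case using add.IH(1,3) by (simp add: distrib_left) }
  { case 2 show ?case using add.IH by (simp add: distrib_left set_integral_add) }
next
  case (scale f c)
  { case 1 show ?case using scale.IH(1) by (simp add: mult.left_commute[of _ c]) }
  { case 2 show ?case using scale.IH by (simp add: mult.left_commute[of _ c]) }
qed

lemma circle_function_orthogonal:
  fixes G :: "complex \<Rightarrow> real"
  assumes iD: "set_integrable lebesgue (Omega L) D"
    and coeff: "\<And>m. fourier_coeff L D m = 0" and G: "continuous_on (sphere 0 1) G"
  shows "(LINT x:Omega L|lebesgue. D x * G (cis (2 * pi / L * x))) = 0"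
proof -
  define c where "c x = cis (2 * pi / L * x)" for x
  have integrable: "set_integrable lebesgue (Omega L) (\<lambda>x. D x * H (c x))"
    if H: "continuous_on (sphere 0 1) H" for H :: "complex \<Rightarrow> real"
  proof -
    have cont: "continuous_on UNIV (\<lambda>x. H (c x))"
      unfolding c_def
      by (rule continuous_on_compose2[OF H continuous_on_cis[OF continuous_on_mult_left[OF continuous_on_id]]])
        auto
    moreover obtain B where "\<forall>v\<in>H ` sphere 0 1. norm v \<le> B"
      using compact_continuous_image[OF H compact_sphere] compact_imp_bounded bounded_iff by metis
    then have B: "norm (H (c x)) \<le> B" for x by (simp add: c_def)
    show ?thesis
      using set_integrable_scaleR_bounded[OF iD borel_measurable_lebesgue_continuous[OF cont] B]
      by simp
  qed
  define I where "I = (LINT x:Omega L|lebesgue. D x * G (c x))"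
  define A where "A = (LINT x:Omega L|lebesgue. \<bar>D x\<bar>)"
  have "A \<ge> 0" unfolding A_def set_lebesgue_integral_def
    by (rule Bochner_Integration.integral_nonneg) (simp add: indicator_def)
  have approx: "\<bar>I\<bar> \<le> e * A" if "e > 0" for e
  proof -
    obtain g where g: "real_polynomial_function g"
      and close: "\<And>z. z \<in> sphere 0 1 \<Longrightarrow> \<bar>G z - g z\<bar> < e"
      using Stone_Weierstrass_real_polynomial_function[OF compact_sphere G \<open>e > 0\<close>] by blast
    have cg: "continuous_on (sphere 0 1) g"
      using g by (simp add: real_polynomial_function_eq continuous_on_polymonial_function)
    have "complex_of_real (LINT x:Omega L|lebesgue. D x * g (c x)) = 0"
      using trig_poly_orthogonal(2)[OF iD coeff trig_poly_polynomial_function_cis[OF g]]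
      by (simp add: c_def set_integral_complex_of_real[symmetric])
    then have "I = (LINT x:Omega L|lebesgue. D x * G (c x) - D x * g (c x))"
      unfolding I_def using set_integral_diff(2)[OF integrable[OF G] integrable[OF cg]] by simp
    also have "\<dots> = (LINT x:Omega L|lebesgue. D x * (G (c x) - g (c x)))"
      by (simp add: right_diff_distrib)
    finally have I_eq: "I = \<dots>" .
    have "set_integrable lebesgue (Omega L) (\<lambda>x. D x * (G (c x) - g (c x)))"
      using set_integral_diff(1)[OF integrable[OF G] integrable[OF cg]] by (simp add: right_diff_distrib)
    moreover have "\<bar>G (c x) - g (c x)\<bar> \<le> e" for x
      using close[of "c x"] by (simp add: c_def)
    ultimately show ?thesis
      unfolding I_eq A_def by (rule abs_set_integral_mult_le[OF iD])
  qed
  have "\<bar>I\<bar> \<le> 0"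
  proof (rule field_le_epsilon)
    fix e :: real assume "e > 0"
    then have "\<bar>I\<bar> \<le> e / (A + 1) * A" using \<open>A \<ge> 0\<close> by (intro approx) simp
    also have "\<dots> \<le> e" using \<open>e > 0\<close> \<open>A \<ge> 0\<close> by (simp add: field_simps)
    finally show "\<bar>I\<bar> \<le> 0 + e" by simp
  qed
  then show ?thesis unfolding I_def c_def by simp
qed

lemma inj_on_cis_Omega:
  assumes L: "L > 0"
  shows "inj_on (\<lambda>x. cis (2 * pi / L * x)) (Omega L)"
proof (rule inj_onI)
  fix x y assume x: "x \<in> Omega L" and y: "y \<in> Omega L"
    and "cis (2 * pi / L * x) = cis (2 * pi / L * y)"
  then obtain n :: int where "\<i> * complex_of_real (2 * pi / L * x)
      = \<i> * complex_of_real (2 * pi / L * y) + complex_of_real (real_of_int (2 * n) * pi) * \<i>"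
    unfolding cis_conv_exp exp_eq by blast
  then have "Im (\<i> * complex_of_real (2 * pi / L * x))
      = Im (\<i> * complex_of_real (2 * pi / L * y) + complex_of_real (real_of_int (2 * n) * pi) * \<i>)"
    by simp
  then have "2 * pi / L * x = 2 * pi / L * y + 2 * real_of_int n * pi" by simp
  then have "pi * (2 * (x - y - real_of_int n * L)) = 0" using L by (simp add: field_simps)
  then have "x - y = real_of_int n * L" by simp
  moreover have "\<bar>x - y\<bar> < L" using x y by (auto simp: Omega_def)
  ultimately have "\<bar>real_of_int n\<bar> < 1" using L by (simp add: abs_mult)
  then have "n = 0" by linarith
  with \<open>x - y = real_of_int n * L\<close> show "x = y" by simp
qed

lemma tendsto_infdist_cutoff_indicator:
  assumes A: "closed A" "A \<noteq> {}"
  shows "(\<lambda>n. max 0 (1 - real n * infdist z A)) \<longlonglongrightarrow> indicator A z"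
proof (cases "z \<in> A")
  case True
  then show ?thesis by simp
next
  case False
  then have d: "infdist z A > 0"
    using in_closed_iff_infdist_zero[OF A, of z] infdist_nonneg[of z A] by linarith
  obtain N :: nat where "1 / infdist z A \<le> real N" using real_arch_simple by blast
  have "max 0 (1 - real n * infdist z A) = indicator A z" if "n \<ge> N" for n
  proof -
    have "1 \<le> real N * infdist z A" using \<open>1 / infdist z A \<le> real N\<close> d by (simp add: divide_le_eq)
    also have "\<dots> \<le> real n * infdist z A" using that d by (intro mult_right_mono) auto
    finally show ?thesis using False by (simp add: max_absorb1)
  qed
  then have "\<forall>\<^sub>F n in sequentially. max 0 (1 - real n * infdist z A) = indicator A z"
    unfolding eventually_sequentially by blast
  then show ?thesis by (rule tendsto_eventually)
qed

lemma interval_integral_eq_0_if_fourier_coeff_eq_0: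
  assumes L: "L > 0" and iD: "set_integrable lebesgue (Omega L) D"
    and coeff: "\<And>m. fourier_coeff L D m = 0"
    and ab: "-L/2 < a" "a \<le> b" "b \<le> L/2"
  shows "(LINT x:{a..b}|lebesgue. D x) = 0"
proof -
  define c where "c x = cis (2 * pi / L * x)" for x
  define A where "A = c ` {a..b}"
  define G where "G n z = max 0 (1 - real n * infdist z A)" for n :: nat and z
  have sub: "{a..b} \<subseteq> Omega L" using ab by (auto simp: Omega_def)
  have cc: "continuous_on UNIV c"
    unfolding c_def by (intro continuous_on_cis continuous_on_mult_left continuous_on_id)
  have "compact A" unfolding A_def by (rule compact_continuous_image[OF continuous_on_subset[OF cc]]) auto
  then have A: "closed A" "A \<noteq> {}" using ab by (auto simp: A_def compact_imp_closed)
  have cG: "continuous_on UNIV (G n)" for n unfolding G_def by (intro continuous_intros)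
  have G01: "\<bar>G n z\<bar> \<le> 1" for n z unfolding G_def using infdist_nonneg[of z A] by auto
  have "c x \<in> A \<longleftrightarrow> x \<in> {a..b}" if "x \<in> Omega L" for x
    using inj_on_cis_Omega[OF L] that sub unfolding A_def c_def inj_on_def by blast
  then have lim_G: "(\<lambda>n. G n (c x)) \<longlonglongrightarrow> indicator {a..b} x" if "x \<in> Omega L" for x
    using tendsto_infdist_cutoff_indicator[OF A, of "c x"] that
    unfolding G_def by (simp add: indicator_def)
  define D' where "D' x = indicator (Omega L) x * D x" for x
  have iD': "integrable lebesgue D'" using iD unfolding set_integrable_def D'_def by simp
  have "(\<lambda>n. LINT x|lebesgue. D' x * G n (c x)) \<longlonglongrightarrow> (LINT x|lebesgue. D' x * indicator {a..b} x)"
  proof (rule integral_dominated_convergence[where w = "\<lambda>x. \<bar>D' x\<bar>"])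
    show "(\<lambda>x. D' x * indicator {a..b} x) \<in> borel_measurable lebesgue"
      using borel_measurable_integrable[OF iD'] by measurable
    show "(\<lambda>x. D' x * G n (c x)) \<in> borel_measurable lebesgue" for n
      by (intro borel_measurable_times borel_measurable_integrable[OF iD']
          borel_measurable_lebesgue_continuous continuous_on_compose2[OF cG cc]) auto
    show "AE x in lebesgue. norm (D' x * G n (c x)) \<le> \<bar>D' x\<bar>" for n
      using G01 by (intro always_eventually) (simp add: abs_mult mult_left_le)
    show "AE x in lebesgue. (\<lambda>n. D' x * G n (c x)) \<longlonglongrightarrow> D' x * indicator {a..b} x"
    proof (intro always_eventually allI)
      show "(\<lambda>n. D' x * G n (c x)) \<longlonglongrightarrow> D' x * indicator {a..b} x" for x
        using lim_G[of x] by (cases "x \<in> Omega L") (auto simp: D'_def intro: tendsto_mult_left)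
    qed
  qed (use iD' in simp)
  moreover have "(LINT x|lebesgue. D' x * G n (c x)) = 0" for n
    using circle_function_orthogonal[OF iD coeff continuous_on_subset[OF cG]]
    by (simp add: D'_def c_def set_lebesgue_integral_def mult.assoc)
  moreover have "(LINT x|lebesgue. D' x * indicator {a..b} x) = (LINT x:{a..b}|lebesgue. D x)"
    unfolding set_lebesgue_integral_def D'_def
    by (rule Bochner_Integration.integral_cong) (use sub in \<open>auto split: split_indicator\<close>)
  ultimately show ?thesis
    by (simp add: LIMSEQ_const_iff)
qed

lemma AE_eq_0_if_interval_integrals_eq_0:
  fixes D :: "real \<Rightarrow> real"
  assumes iD: "set_integrable lebesgue (Omega L) D"
    and intervals: "\<And>a b. -L/2 < a \<Longrightarrow> a \<le> b \<Longrightarrow> b \<le> L/2 \<Longrightarrow> (LINT x:{a..b}|lebesgue. D x) = 0"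
  shows "AE x in lebesgue. x \<in> Omega L \<longrightarrow> D x = 0"
proof -
  define f where "f x = (if x \<in> Omega L then D x else 0)" for x
  have "f absolutely_integrable_on UNIV"
    using iD unfolding f_def by (simp add: absolutely_integrable_restrict_UNIV)
  then have "f integrable_on cbox a b" for a b
    using integrable_on_subcbox absolutely_integrable_on_def by blast
  then obtain N where N: "negligible N"
    and diff: "\<And>x e. x \<notin> N \<Longrightarrow> 0 < e \<Longrightarrow> \<exists>d>0. \<forall>h. 0 < h \<and> h < d \<longrightarrow>
        norm (integral (cbox x (x + h *\<^sub>R One)) f /\<^sub>R h ^ DIM(real) - f x) < e"
    using integrable_ccontinuous_explicit \<comment> \<open>Lebesgue's differentiation theorem\<close> by blast
  have "\<bar>D x\<bar> \<le> 0" if x: "x \<in> Omega L" "x \<noteq> L/2" "x \<notin> N" for x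
  proof (rule field_le_epsilon)
    have "\<bar>D x\<bar> < e" if "e > 0" for e
    proof -
      obtain d where "d > 0" and d: "\<And>h. 0 < h \<Longrightarrow> h < d \<Longrightarrow>
          norm (integral (cbox x (x + h *\<^sub>R One)) f /\<^sub>R h ^ DIM(real) - f x) < e"
        using diff[OF x(3) \<open>e > 0\<close>] by blast
      define h where "h = min (d/2) ((L/2 - x)/2)"
      have h: "0 < h" "h < d" "-L/2 < x" "x \<le> x + h" "x + h \<le> L/2"
        using \<open>d > 0\<close> x by (auto simp: h_def Omega_def min_def field_simps)
      have "integral (cbox x (x + h *\<^sub>R One)) f = integral {x..x + h} D"
        using h by (auto simp: f_def Omega_def cbox_interval intro!: integral_cong)
      also have "\<dots> = (LINT t:{x..x + h}|lebesgue. D t)"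
        using h by (intro set_lebesgue_integral_eq_integral(2)[symmetric] set_integrable_subset[OF iD])
          (auto simp: Omega_def)
      also have "\<dots> = 0" using intervals h by blast
      finally have "integral (cbox x (x + h *\<^sub>R One)) f = 0" .
      with d[OF h(1,2)] x(1) show "\<bar>D x\<bar> < e" by (simp add: f_def)
    qed
    then show "\<bar>D x\<bar> \<le> 0 + e" if "e > 0" for e using that by fastforce
  qed
  moreover have "N \<union> {L/2} \<in> null_sets lebesgue"
    using N by (simp add: negligible_iff_null_sets[symmetric] negligible_insert)
  ultimately show ?thesis
    by (intro AE_I'[of "N \<union> {L/2}"]) force+
qed

lemma AE_eq_0_if_fourier_coeff_eq_0:
  assumes L: "L > 0" and iD: "set_integrable lebesgue (Omega L) D"
    and coeff: "\<And>m. fourier_coeff L D m = 0"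
  shows "AE x in lebesgue. x \<in> Omega L \<longrightarrow> D x = 0"
  using AE_eq_0_if_interval_integrals_eq_0[OF iD interval_integral_eq_0_if_fourier_coeff_eq_0[OF L iD coeff]] .

section \<open>Identification of the kernel\<close>

lemma conv_eq_if_stationary:
  assumes L: "L > 0"
    and pW: "periodic L W" and iW: "set_integrable lebesgue (Omega L) W"
    and pW0: "periodic L W0" and iW0: "set_integrable lebesgue (Omega L) W0"
    and mean: "(LINT x:Omega L|lebesgue. W x) = (LINT x:Omega L|lebesgue. W0 x)"
    and u: "C2 u" and pu: "periodic L u" and upos: "\<forall>x\<in>Omega L. u x > 0"
    and flux: "\<forall>x\<in>Omega L. ((\<lambda>y. deriv u y + u y * deriv (conv L W u) y) has_real_derivative 0) (at x)"
    and flux0: "\<forall>x\<in>Omega L. ((\<lambda>y. deriv u y + u y * deriv (conv L W0 u) y) has_real_derivative 0) (at x)"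
    and x: "x \<in> Omega L"
  shows "conv L W u x = conv L W0 u x"
proof -
  define V V0 where "V = conv L W u" and "V0 = conv L W0 u"
  define K where "K = V (L/2) - V0 (L/2)"
  have end_Omega: "L/2 \<in> Omega L" using L by (simp add: Omega_def)
  note stationary = stationary_log_plus_potential_const[OF L C2_has_real_derivative(1)[OF u] pu upos]
  have diff_const: "V y - V0 y = K" if "y \<in> Omega L" for y
    using stationary[OF conv_has_real_derivative_C2[OF L pW iW u pu] periodic_conv[OF pW] flux that end_Omega]
      stationary[OF conv_has_real_derivative_C2[OF L pW0 iW0 u pu] periodic_conv[OF pW0] flux0 that end_Omega]
    unfolding K_def V_def V0_def by simp
  have "continuous_on UNIV V" "continuous_on UNIV V0"
    unfolding V_def V0_def using conv_has_real_derivative_C2[OF L _ _ u pu] pW pW0 iW iW0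
    by (meson DERIV_isCont continuous_at_imp_continuous_on)+
  then have iV: "set_integrable lebesgue (Omega L) V" and iV0: "set_integrable lebesgue (Omega L) V0"
    unfolding Omega_def by (simp_all add: continuous_set_integrable_Ioc)
  have "(LINT y:Omega L|lebesgue. V y - V0 y) = (LINT y:Omega L|lebesgue. K)"
    by (rule set_lebesgue_integral_cong) (auto simp: diff_const)
  also have "\<dots> = L * K"
  proof -
    have "emeasure lebesgue (Omega L) \<noteq> \<infinity>"
      using fmeasurableD2[OF lmeasurable_Omega] by simp
    then show ?thesis
      using set_integral_const[OF sets_lebesgue_Omega, of L K] measure_Omega[OF L] by simp
  qed
  finally have "L * K = (LINT y:Omega L|lebesgue. V y) - (LINT y:Omega L|lebesgue. V0 y)"
    using set_integral_diff(2)[OF iV iV0] by simp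
  also have "\<dots> = 0"
    using mean unfolding V_def V0_def
    using set_integral_conv[OF L pW iW C2_continuous_on(1)[OF u] pu]
      set_integral_conv[OF L pW0 iW0 C2_continuous_on(1)[OF u] pu] by simp
  finally have "K = 0" using L by simp
  then show ?thesis using diff_const[OF x] unfolding V_def V0_def by simp
qed

theorem mainTheorem1:
  fixes L :: real and W W0 u :: "real \<Rightarrow> real"
  assumes "L > 0"
    and "H2_per L W" and "H2_per L W0"
    and "periodic L W" and "periodic L W0"
    and "even_fun W" and "even_fun W0"
    and "(LINT x:Omega L|lebesgue. W x) = (LINT x:Omega L|lebesgue. W0 x)"
    and "C2 u" and "periodic L u"
    and "\<forall>x\<in>Omega L. u x > 0"
    and "(LINT x:Omega L|lebesgue. u x) = 1"
    and "\<forall>x\<in>Omega L. ((\<lambda>y. deriv u y + u y * deriv (conv L W u) y) has_real_derivative 0) (at x)"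
    and "\<forall>x\<in>Omega L. ((\<lambda>y. deriv u y + u y * deriv (conv L W0 u) y) has_real_derivative 0) (at x)"
  shows "(\<forall>x\<in>Omega L. conv L W u x = conv L W0 u x)
       \<and> (\<forall>k::int. fourier_coeff L u k \<noteq> 0 \<longrightarrow> fourier_coeff L W k = fourier_coeff L W0 k)
       \<and> ((\<forall>k::int. k \<noteq> 0 \<longrightarrow> fourier_coeff L u k \<noteq> 0) \<longrightarrow>
            (AE x in lebesgue. x \<in> Omega L \<longrightarrow> W x = W0 x))"
proof -
  note L = assms(1) and pW = assms(4) and pW0 = assms(5) and mean = assms(8)
    and u = assms(9) and pu = assms(10)
  have iW: "set_integrable lebesgue (Omega L) W" and iW0: "set_integrable lebesgue (Omega L) W0"
    using assms(2,3) by (simp_all add: set_integrable_Omega_if_H2_per)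
  have potentials: "\<forall>x\<in>Omega L. conv L W u x = conv L W0 u x"
    using conv_eq_if_stationary[OF L pW iW pW0 iW0 mean u pu assms(11,13,14)] by blast
  have "fourier_coeff L W k * fourier_coeff L u k = fourier_coeff L W0 k * fourier_coeff L u k" for k
    using fourier_coeff_conv[OF L _ _ C2_continuous_on(1)[OF u] pu] pW pW0 iW iW0
      fourier_coeff_cong[of L "conv L W u" "conv L W0 u" k] potentials by metis
  then have coeffs: "\<forall>k. fourier_coeff L u k \<noteq> 0 \<longrightarrow> fourier_coeff L W k = fourier_coeff L W0 k"
    by (metis mult_cancel_right)
  have "AE x in lebesgue. x \<in> Omega L \<longrightarrow> W x - W0 x = 0"
    if "\<forall>k. k \<noteq> 0 \<longrightarrow> fourier_coeff L u k \<noteq> 0"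
  proof (rule AE_eq_0_if_fourier_coeff_eq_0[OF L set_integral_diff(1)[OF iW iW0]])
    show "fourier_coeff L (\<lambda>x. W x - W0 x) m = 0" for m
      unfolding fourier_coeff_diff[OF iW iW0]
      using coeffs that mean by (cases "m = 0") (simp_all add: fourier_coeff_0)
  qed
  then show ?thesis using potentials coeffs by auto
qed

end
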